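(* Let $\mathcal{S}=(\mathbb{Z},\le)$ and for $m\in\mathbb{N}$ let $\mathcal{S}_m$ be the substructure with universe $2\mathbb{Z}\cup(\mathbb{Z}\cap[-2m,2m])$, indexed by $\mathbb{N}$ with its usual order. Then $\lim_{\mathbb{N}}\mathrm{Th}(\mathcal{S}_m^* )=\mathrm{Th}(\mathcal{S}^* )$, while for each $m$, $\mathcal{S}_m$ is not an elementary substructure of $\mathcal{S}$, nor of $\mathcal{S}_k$ for any $k>m$.
   Context: $\mathrm{Th}(\mathcal{T}^* )$ is the set of sentences in the language $\{\le\}$ expanded by a constant for each element of the universe of $\mathcal{T}$ that are true in $\mathcal{T}$; all are regarded as subsets of the set of sentences with constants from $\mathbb{Z}$. For a family $\{\Delta_m\}_{m\in\mathbb{N}}$: $\limsup\Delta_m=\{\theta:\forall n\,\exists m\ge n\,[\theta\in\Delta_m]\}$, $\liminf\Delta_m=\{\theta:\exists n\,\forall m\ge n\,[\theta\in\Delta_m]\}$, and $\lim\Delta_m=\Delta$ means both equal $\Delta$. *)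

theory Defs
  imports Main
begin

text \<open>Structures are substructures of (Z, <=), given by their universe U.\<close>

datatype tm = Var nat | Cst int

datatype fm = FF | Le tm tm | Eq tm tm | Neg fm | Conj fm fm | Disj fm fm
  | Imp fm fm | Ex nat fm | All nat fm

fun tval :: "(nat \<Rightarrow> int) \<Rightarrow> tm \<Rightarrow> int" where
  "tval e (Var n) = e n"
| "tval e (Cst c) = c"

fun tvars :: "tm \<Rightarrow> nat set" where
  "tvars (Var n) = {n}"
| "tvars (Cst c) = {}"

fun tconsts :: "tm \<Rightarrow> int set" where
  "tconsts (Var n) = {}"
| "tconsts (Cst c) = {c}"

fun fv :: "fm \<Rightarrow> nat set" where
  "fv FF = {}"
| "fv (Le s t) = tvars s \<union> tvars t"
| "fv (Eq s t) = tvars s \<union> tvars t"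
| "fv (Neg p) = fv p"
| "fv (Conj p q) = fv p \<union> fv q"
| "fv (Disj p q) = fv p \<union> fv q"
| "fv (Imp p q) = fv p \<union> fv q"
| "fv (Ex n p) = fv p - {n}"
| "fv (All n p) = fv p - {n}"

fun fconsts :: "fm \<Rightarrow> int set" where
  "fconsts FF = {}"
| "fconsts (Le s t) = tconsts s \<union> tconsts t"
| "fconsts (Eq s t) = tconsts s \<union> tconsts t"
| "fconsts (Neg p) = fconsts p"
| "fconsts (Conj p q) = fconsts p \<union> fconsts q"
| "fconsts (Disj p q) = fconsts p \<union> fconsts q"
| "fconsts (Imp p q) = fconsts p \<union> fconsts q"
| "fconsts (Ex n p) = fconsts p"
| "fconsts (All n p) = fconsts p"

fun sat :: "int set \<Rightarrow> (nat \<Rightarrow> int) \<Rightarrow> fm \<Rightarrow> bool" where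
  "sat U e FF = False"
| "sat U e (Le s t) = (tval e s \<le> tval e t)"
| "sat U e (Eq s t) = (tval e s = tval e t)"
| "sat U e (Neg p) = (\<not> sat U e p)"
| "sat U e (Conj p q) = (sat U e p \<and> sat U e q)"
| "sat U e (Disj p q) = (sat U e p \<or> sat U e q)"
| "sat U e (Imp p q) = (sat U e p \<longrightarrow> sat U e q)"
| "sat U e (Ex n p) = (\<exists>x\<in>U. sat U (e(n := x)) p)"
| "sat U e (All n p) = (\<forall>x\<in>U. sat U (e(n := x)) p)"

definition sentence :: "fm \<Rightarrow> bool" where
  "sentence p \<longleftrightarrow> fv p = {}"

text \<open>Th(T*): sentences with constants from the universe U, true in the structure.\<close>
definition Th_star :: "int set \<Rightarrow> fm set" where
  "Th_star U = {p. sentence p \<and> fconsts p \<subseteq> U \<and> (\<forall>e. (\<forall>n. e n \<in> U) \<longrightarrow> sat U e p)}"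

definition limsup_fam :: "(nat \<Rightarrow> 'a set) \<Rightarrow> 'a set" where
  "limsup_fam D = {x. \<forall>n. \<exists>m\<ge>n. x \<in> D m}"

definition liminf_fam :: "(nat \<Rightarrow> 'a set) \<Rightarrow> 'a set" where
  "liminf_fam D = {x. \<exists>n. \<forall>m\<ge>n. x \<in> D m}"

definition has_lim :: "(nat \<Rightarrow> 'a set) \<Rightarrow> 'a set \<Rightarrow> bool" where
  "has_lim D L \<longleftrightarrow> limsup_fam D = L \<and> liminf_fam D = L"

definition elem_sub :: "int set \<Rightarrow> int set \<Rightarrow> bool" where
  "elem_sub A B \<longleftrightarrow> A \<subseteq> B \<and>
     (\<forall>p e. fconsts p \<subseteq> A \<longrightarrow> (\<forall>n. e n \<in> A) \<longrightarrow> (sat A e p \<longleftrightarrow> sat B e p))"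

definition S_univ :: "nat \<Rightarrow> int set" where
  "S_univ m = {x. even x} \<union> {- 2 * int m .. 2 * int m}"

end

theory Submission
  imports Defs
begin

text \<open>Stretching the integers outside [-2m, 2m] by a factor of 2 is an order isomorphism
  from (Z, <=) onto the substructure with universe 2Z \<union> [-2m, 2m] that fixes every constant
  in [-2m, 2m]. Isomorphisms preserve truth of formulas whose constants they fix, so a sentence
  of Th(S*) lies in Th(S_m*) as soon as 2m bounds its constants, and conversely; hence the
  theories converge. On the other hand S_m has no element strictly between 2m and 2m + 2,
  while Z and every S_k with k > m contain 2m + 1, so no elementary extension is possible.\<close>

lemma tval_comp:
  assumes "\<forall>c\<in>tconsts t. g c = c"
  shows "tval (g \<circ> e) t = g (tval e t)"
  using assms by (cases t) auto

lemma tval_in: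
  assumes "tconsts t \<subseteq> A" "\<forall>n. e n \<in> A"
  shows "tval e t \<in> A"
  using assms by (cases t) auto

lemma sat_order_iso:
  assumes mono: "\<forall>x\<in>A. \<forall>y\<in>A. g x \<le> g y \<longleftrightarrow> x \<le> y"
    and onto: "g ` A = B"
    and "fconsts p \<subseteq> A" "\<forall>c\<in>fconsts p. g c = c" "\<forall>n. e n \<in> A"
  shows "sat A e p \<longleftrightarrow> sat B (g \<circ> e) p"
  using assms(3-5)
proof (induction p arbitrary: e)
  case (Le s t)
  then have "tval (g \<circ> e) s = g (tval e s)" "tval (g \<circ> e) t = g (tval e t)"
    "tval e s \<in> A" "tval e t \<in> A"
    using tval_comp[of s g e] tval_comp[of t g e] tval_in[of s A e] tval_in[of t A e] by auto
  with mono show ?case by (metis sat.simps(2))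
next
  case (Eq s t)
  then have "tval (g \<circ> e) s = g (tval e s)" "tval (g \<circ> e) t = g (tval e t)"
    "tval e s \<in> A" "tval e t \<in> A"
    using tval_comp[of s g e] tval_comp[of t g e] tval_in[of s A e] tval_in[of t A e] by auto
  moreover have "\<forall>x\<in>A. \<forall>y\<in>A. g x = g y \<longleftrightarrow> x = y"
    using mono by (metis order_antisym order_refl)
  ultimately show ?case by (metis sat.simps(3))
next
  case (Ex n p)
  have "sat A (e(n := x)) p \<longleftrightarrow> sat B ((g \<circ> e)(n := g x)) p" if "x \<in> A" for x
    unfolding fun_upd_comp[symmetric] by (rule Ex.IH) (use Ex.prems that in auto)
  then show ?case by (simp add: onto[symmetric] del: comp_apply)
next
  case (All n p)
  have "sat A (e(n := x)) p \<longleftrightarrow> sat B ((g \<circ> e)(n := g x)) p" if "x \<in> A" for x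
    unfolding fun_upd_comp[symmetric] by (rule All.IH) (use All.prems that in auto)
  then show ?case by (simp add: onto[symmetric] del: comp_apply)
qed auto

lemma valid_order_iso:
  assumes mono: "\<forall>x\<in>A. \<forall>y\<in>A. g x \<le> g y \<longleftrightarrow> x \<le> y"
    and onto: "g ` A = B"
    and fixed: "fconsts p \<subseteq> A" "\<forall>c\<in>fconsts p. g c = c"
  shows "(\<forall>e. (\<forall>n. e n \<in> A) \<longrightarrow> sat A e p) \<longleftrightarrow> (\<forall>e. (\<forall>n. e n \<in> B) \<longrightarrow> sat B e p)"
proof
  assume valid_A: "\<forall>e. (\<forall>n. e n \<in> A) \<longrightarrow> sat A e p"
  show "\<forall>e. (\<forall>n. e n \<in> B) \<longrightarrow> sat B e p"
  proof (intro allI impI)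
    fix e :: "nat \<Rightarrow> int" assume "\<forall>n. e n \<in> B"
    then have e: "\<forall>n. e n \<in> g ` A"
      unfolding onto .
    define h where "h = inv_into A g \<circ> e"
    have h: "\<forall>n. h n \<in> A"
      using e by (simp add: h_def inv_into_into)
    then have "sat B (g \<circ> h) p"
      using valid_A sat_order_iso[OF mono onto fixed h] by blast
    moreover have "g \<circ> h = e"
      using e by (auto simp: h_def f_inv_into_f)
    ultimately show "sat B e p"
      by simp
  qed
next
  assume valid_B: "\<forall>e. (\<forall>n. e n \<in> B) \<longrightarrow> sat B e p"
  show "\<forall>e. (\<forall>n. e n \<in> A) \<longrightarrow> sat A e p"
  proof (intro allI impI)
    fix e :: "nat \<Rightarrow> int" assume e: "\<forall>n. e n \<in> A"
    then have "\<forall>n. (g \<circ> e) n \<in> B"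
      unfolding onto[symmetric] by simp
    then have "sat B (g \<circ> e) p"
      using valid_B by blast
    then show "sat A e p"
      using sat_order_iso[OF mono onto fixed e] by blast
  qed
qed

definition stretch :: "nat \<Rightarrow> int \<Rightarrow> int" where
  "stretch m x = (if x > 2 * int m then 2 * x - 2 * int m
                  else if x < - 2 * int m then 2 * x + 2 * int m else x)"

lemma stretch_le_iff: "stretch m x \<le> stretch m y \<longleftrightarrow> x \<le> y"
  unfolding stretch_def by auto

lemma range_stretch: "range (stretch m) = S_univ m"
proof
  show "range (stretch m) \<subseteq> S_univ m"
    unfolding stretch_def S_univ_def by auto
  show "S_univ m \<subseteq> range (stretch m)"
  proof
    fix y assume "y \<in> S_univ m"
    then consider "\<bar>y\<bar> \<le> 2 * int m" | k where "y = 2 * k" "\<bar>y\<bar> > 2 * int m"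
      unfolding S_univ_def by fastforce
    then show "y \<in> range (stretch m)"
    proof cases
      case 1
      then have "stretch m y = y"
        unfolding stretch_def by auto
      then show ?thesis
        by (metis rangeI)
    next
      case 2
      then have "stretch m (if y > 0 then k + int m else k - int m) = y"
        unfolding stretch_def by auto
      then show ?thesis
        by (metis rangeI)
    qed
  qed
qed

lemma stretch_fixed: "\<bar>c\<bar> \<le> 2 * int m \<Longrightarrow> stretch m c = c"
  unfolding stretch_def by auto

lemma Th_star_S_univ_iff:
  assumes bounded: "\<forall>c\<in>fconsts p. \<bar>c\<bar> \<le> 2 * int m"
  shows "p \<in> Th_star (S_univ m) \<longleftrightarrow> p \<in> Th_star UNIV"
proof -
  have "fconsts p \<subseteq> S_univ m"
    using bounded unfolding S_univ_def by (auto simp: abs_le_iff)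
  moreover have "(\<forall>e. (\<forall>n. e n \<in> UNIV) \<longrightarrow> sat UNIV e p)
      \<longleftrightarrow> (\<forall>e. (\<forall>n. e n \<in> S_univ m) \<longrightarrow> sat (S_univ m) e p)"
    using bounded stretch_fixed
    by (intro valid_order_iso[of UNIV "stretch m"]) (auto simp: stretch_le_iff range_stretch)
  ultimately show ?thesis
    unfolding Th_star_def mem_Collect_eq by blast
qed

lemma finite_fconsts: "finite (fconsts p)"
proof -
  have "finite (tconsts t)" for t by (cases t) auto
  then show ?thesis by (induction p) auto
qed

lemma eventually_fconsts_bounded: "\<exists>N. \<forall>m\<ge>N. \<forall>c\<in>fconsts p. \<bar>c\<bar> \<le> 2 * int m"
proof -
  define B where "B = Max (abs ` fconsts p \<union> {0})"
  have "\<forall>c\<in>fconsts p. \<bar>c\<bar> \<le> B"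
    unfolding B_def using finite_fconsts[of p] by simp
  then show ?thesis by (intro exI[of _ "nat B"]) force
qed

lemma has_lim_eventually_eq:
  assumes "\<And>x. \<exists>N. \<forall>m\<ge>N. x \<in> D m \<longleftrightarrow> x \<in> L"
  shows "has_lim D L"
proof -
  have "x \<in> limsup_fam D \<longleftrightarrow> x \<in> L" "x \<in> liminf_fam D \<longleftrightarrow> x \<in> L" for x
  proof -
    obtain N where N: "\<forall>m\<ge>N. x \<in> D m \<longleftrightarrow> x \<in> L" using assms by blast
    have "(\<forall>n. \<exists>m\<ge>n. x \<in> D m) \<longleftrightarrow> x \<in> L"
      using N by (meson nat_le_linear)
    moreover have "(\<exists>n. \<forall>m\<ge>n. x \<in> D m) \<longleftrightarrow> x \<in> L"
      using N by (meson max.cobounded1 max.cobounded2)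
    ultimately show "x \<in> limsup_fam D \<longleftrightarrow> x \<in> L" "x \<in> liminf_fam D \<longleftrightarrow> x \<in> L"
      unfolding limsup_fam_def liminf_fam_def by auto
  qed
  then show ?thesis unfolding has_lim_def by blast
qed

lemma elem_sub_between:
  assumes "elem_sub A B" "a \<in> A" "b \<in> A" "x \<in> B" "a < x" "x < b"
  shows "\<exists>y\<in>A. a < y \<and> y < b"
proof -
  define between where
    "between = Ex 0 (Conj (Neg (Le (Var 0) (Cst a))) (Neg (Le (Cst b) (Var 0))))"
  have between_iff: "sat U (\<lambda>_. a) between \<longleftrightarrow> (\<exists>y\<in>U. a < y \<and> y < b)" for U
    unfolding between_def by (auto simp: not_le)
  have "fconsts between \<subseteq> A"
    unfolding between_def using assms(2,3) by simp
  then have "sat A (\<lambda>_. a) between \<longleftrightarrow> sat B (\<lambda>_. a) between"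
    using assms(1,2) unfolding elem_sub_def by simp
  with assms(4-6) show ?thesis
    unfolding between_iff by blast
qed

lemma not_elem_sub_S_univ:
  assumes "2 * int m + 1 \<in> B"
  shows "\<not> elem_sub (S_univ m) B"
proof
  assume "elem_sub (S_univ m) B"
  moreover have "2 * int m \<in> S_univ m" "2 * int m + 2 \<in> S_univ m"
    unfolding S_univ_def by auto
  ultimately obtain y where y: "y \<in> S_univ m" "2 * int m < y" "y < 2 * int m + 2"
    using elem_sub_between[OF _ _ _ assms] by force
  then have "y = 2 * int m + 1"
    by simp
  with y(1) show False
    by (simp add: S_univ_def)
qed

theorem mainTheorem8:
  shows "has_lim (\<lambda>m. Th_star (S_univ m)) (Th_star UNIV)
         \<and> (\<forall>m. \<not> elem_sub (S_univ m) UNIV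
                 \<and> (\<forall>k>m. \<not> elem_sub (S_univ m) (S_univ k)))"
proof (intro conjI allI impI)
  have "\<exists>N. \<forall>m\<ge>N. p \<in> Th_star (S_univ m) \<longleftrightarrow> p \<in> Th_star UNIV" for p
    using eventually_fconsts_bounded[of p] Th_star_S_univ_iff by blast
  then show "has_lim (\<lambda>m. Th_star (S_univ m)) (Th_star UNIV)"
    by (rule has_lim_eventually_eq)
next
  fix m show "\<not> elem_sub (S_univ m) UNIV"
    by (rule not_elem_sub_S_univ) simp
next
  fix m k :: nat assume "k > m"
  then show "\<not> elem_sub (S_univ m) (S_univ k)"
    by (intro not_elem_sub_S_univ) (auto simp: S_univ_def)
qed

end
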